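(* Let $(X,d)$ be a compact metric space and $f_{1,\infty}$ a sequence of continuous self-maps of $X$. If $(\mathcal{M}(X),\widetilde{f}_{1,\infty})$ is topologically transitive, then $(X,f_{1,\infty})$ is topologically transitive.
   Context: For $f_{1,\infty}=\{f_n\}_{n\ge1}$ write $f_1^n=f_n\circ\cdots\circ f_1$. $\mathcal{M}(X)$ is the space of Borel probability measures on $X$ with the weak$^*$ topology, and $\widetilde{f}_1^n(\mu)(A)=\mu((f_1^n)^{-1}(A))$ for Borel $A$. A non-autonomous system $(Y,g_{1,\infty})$ is topologically transitive if for every pair of non-empty open sets $U,V$ there is $n\in\mathbb{N}$ with $g_1^n(U)\cap V\ne\emptyset$. *)

theory Defs
  imports "HOL-Probability.Probability"
begin

fun iter_comp :: "(nat \<Rightarrow> 'a \<Rightarrow> 'a) \<Rightarrow> nat \<Rightarrow> 'a \<Rightarrow> 'a" where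
  "iter_comp f 0 = id"
| "iter_comp f (Suc n) = f (Suc n) \<circ> iter_comp f n"

definition borel_prob_measures :: "'a::metric_space set \<Rightarrow> 'a measure set" where
  "borel_prob_measures X =
     {\<mu>. prob_space \<mu> \<and> sets \<mu> = sets (restrict_space borel X)}"

definition weak_star_topology :: "'a::metric_space set \<Rightarrow> 'a measure topology" where
  "weak_star_topology X = topology_generated_by
     {{\<mu> \<in> borel_prob_measures X. (\<integral>x. g x \<partial>\<mu>) \<in> U} | g U.
        continuous_on X g \<and> open (U :: real set)}"

definition push_measure :: "'a::metric_space set \<Rightarrow> ('a \<Rightarrow> 'a) \<Rightarrow> 'a measure \<Rightarrow> 'a measure" where
  "push_measure X h \<mu> = distr \<mu> (restrict_space borel X) h"

text \<open>Topological transitivity of a non-autonomous system, given through its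
  composed maps G n = g_1^n (n >= 1) on the topological space T.\<close>
definition nonauto_transitive :: "'b topology \<Rightarrow> (nat \<Rightarrow> 'b \<Rightarrow> 'b) \<Rightarrow> bool" where
  "nonauto_transitive T G \<longleftrightarrow>
     (\<forall>U V. openin T U \<and> openin T V \<and> U \<noteq> {} \<and> V \<noteq> {} \<longrightarrow>
        (\<exists>n\<ge>1. G n ` U \<inter> V \<noteq> {}))"

end

theory Submission
  imports Defs
begin

text \<open>Test the transitivity of the measure system on weak-star neighbourhoods of two Dirac masses
  \<open>\<delta>\<^sub>x, \<delta>\<^sub>y\<close>, built from tent functions supported in small balls around \<open>x\<close> and \<open>y\<close>. A measure
  \<open>\<mu>\<close> near \<open>\<delta>\<^sub>x\<close> whose push-forward is near \<open>\<delta>\<^sub>y\<close> gives mass \<open>> 1/2\<close> both to the ball around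
  \<open>x\<close> and to the preimage of the ball around \<open>y\<close>; these two sets must therefore meet, which
  yields an orbit from the first ball into the second.\<close>

lemma space_eq_if_sets_restrict_borel:
  assumes "sets \<mu> = sets (restrict_space borel X)"
  shows "space \<mu> = X"
  using sets_eq_imp_space_eq[OF assms] by (simp add: space_restrict_space)

lemma iter_comp_continuous_on_image_subset:
  assumes "\<And>n. n \<ge> 1 \<Longrightarrow> continuous_on X (f n)"
    and "\<And>n. n \<ge> 1 \<Longrightarrow> f n ` X \<subseteq> X"
  shows "continuous_on X (iter_comp f n) \<and> iter_comp f n ` X \<subseteq> X"
proof (induction n)
  case 0
  then show ?case by simp
next
  case (Suc n)
  then have "continuous_on X (f (Suc n) \<circ> iter_comp f n)"
    using assms[of "Suc n"] by (intro continuous_on_compose) (auto intro: continuous_on_subset)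
  with Suc assms(2)[of "Suc n"] show ?case by auto
qed

lemma measurable_restrict_borel_if_continuous_on:
  assumes "continuous_on X F" "F ` X \<subseteq> X"
  shows "F \<in> restrict_space borel X \<rightarrow>\<^sub>M restrict_space borel X"
  using assms
  by (intro measurable_restrict_space2 borel_measurable_continuous_on_restrict)
     (auto simp: space_restrict_space)

definition tent :: "'a::metric_space \<Rightarrow> real \<Rightarrow> 'a \<Rightarrow> real" where
  "tent x r z = max 0 (1 - dist z x / r)"

lemma continuous_on_tent: "r > 0 \<Longrightarrow> continuous_on S (tent x r)"
  unfolding tent_def by (intro continuous_intros) auto

lemma tent_centre [simp]: "tent x r x = 1"
  by (simp add: tent_def)

lemma tent_nonneg: "0 \<le> tent x r z"
  by (simp add: tent_def)

lemma tent_le_indicator_ball: "r > 0 \<Longrightarrow> tent x r z \<le> indicator (ball x r) z"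
  by (cases "dist z x < r") (auto simp: tent_def indicator_def dist_commute field_simps)

lemma integral_le_measure_if_le_indicator:
  fixes g :: "'a::metric_space \<Rightarrow> real"
  assumes "\<mu> \<in> borel_prob_measures X" "continuous_on X g" "open B"
    and "\<And>z. 0 \<le> g z" "\<And>z. g z \<le> indicator B z"
  shows "(\<integral>z. g z \<partial>\<mu>) \<le> measure \<mu> (B \<inter> X)"
proof -
  have sets: "sets \<mu> = sets (restrict_space borel X)" and "prob_space \<mu>"
    using assms(1) by (auto simp: borel_prob_measures_def)
  interpret prob_space \<mu> by fact
  have space: "space \<mu> = X"
    using space_eq_if_sets_restrict_borel[OF sets] .
  have "g \<in> borel_measurable \<mu>"
    using borel_measurable_continuous_on_restrict[OF assms(2)]
    by (simp add: measurable_cong_sets[OF sets refl])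
  then have g: "integrable \<mu> g"
    using assms(4,5) by (intro integrable_const_bound[where B=1])
      (auto intro!: AE_I2 order_trans[OF _ indicator_le_1])
  have BX: "B \<inter> X \<in> sets \<mu>"
    using sets assms(3) by (auto simp: sets_restrict_space)
  have "(\<integral>z. g z \<partial>\<mu>) \<le> (\<integral>z. indicator (B \<inter> X) z \<partial>\<mu>)"
  proof (rule integral_mono[OF g])
    show "integrable \<mu> (indicator (B \<inter> X) :: _ \<Rightarrow> real)"
      using BX by (intro integrable_real_indicator) (auto simp: less_top[symmetric])
    show "g z \<le> indicator (B \<inter> X) z" if "z \<in> space \<mu>" for z
      using assms(5)[of z] that space by (auto simp: indicator_def)
  qed
  with BX show ?thesis by simp
qed

lemma openin_weak_star_integral:
  fixes g :: "'a::metric_space \<Rightarrow> real"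
  assumes "continuous_on X g" "open U"
  shows "openin (weak_star_topology X) {\<mu> \<in> borel_prob_measures X. (\<integral>x. g x \<partial>\<mu>) \<in> U}"
  unfolding weak_star_topology_def
  using assms by (intro topology_generated_by_Basis) blast

lemma return_in_borel_prob_measures:
  "x \<in> X \<Longrightarrow> return (restrict_space borel X) x \<in> borel_prob_measures X"
  by (simp add: borel_prob_measures_def prob_space_return space_restrict_space)

lemma integral_return_restrict_borel:
  fixes g :: "'a::metric_space \<Rightarrow> real"
  assumes "x \<in> X" "continuous_on X g"
  shows "(\<integral>z. g z \<partial>return (restrict_space borel X) x) = g x"
  using assms borel_measurable_continuous_on_restrict[OF assms(2)]
  by (simp add: integral_return space_restrict_space)

definition weak_star_nbhd :: "'a::metric_space set \<Rightarrow> 'a \<Rightarrow> real \<Rightarrow> 'a measure set" where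
  "weak_star_nbhd X x r = {\<mu> \<in> borel_prob_measures X. (\<integral>z. tent x r z \<partial>\<mu>) \<in> {1/2<..}}"

lemma openin_weak_star_nbhd: "r > 0 \<Longrightarrow> openin (weak_star_topology X) (weak_star_nbhd X x r)"
  unfolding weak_star_nbhd_def by (intro openin_weak_star_integral continuous_on_tent) auto

lemma return_in_weak_star_nbhd:
  "x \<in> X \<Longrightarrow> r > 0 \<Longrightarrow> return (restrict_space borel X) x \<in> weak_star_nbhd X x r"
  by (simp add: weak_star_nbhd_def return_in_borel_prob_measures
      integral_return_restrict_borel continuous_on_tent)

lemma measure_ball_gt_half_if_in_weak_star_nbhd:
  assumes "\<mu> \<in> weak_star_nbhd X x r" "r > 0"
  shows "measure \<mu> (ball x r \<inter> X) > 1/2"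
  using assms integral_le_measure_if_le_indicator[of \<mu> X "tent x r" "ball x r"]
  by (force simp: weak_star_nbhd_def continuous_on_tent tent_nonneg tent_le_indicator_ball)

lemma measure_push_measure:
  assumes "\<mu> \<in> borel_prob_measures X" "continuous_on X F" "F ` X \<subseteq> X"
    and "A \<in> sets (restrict_space borel X)"
  shows "measure (push_measure X F \<mu>) A = measure \<mu> (F -` A \<inter> X)"
proof -
  have sets: "sets \<mu> = sets (restrict_space borel X)"
    using assms(1) by (simp add: borel_prob_measures_def)
  have "F \<in> \<mu> \<rightarrow>\<^sub>M restrict_space borel X"
    using measurable_restrict_borel_if_continuous_on[OF assms(2,3)]
    by (simp add: measurable_cong_sets[OF sets refl])
  then show ?thesis
    using assms(4) space_eq_if_sets_restrict_borel[OF sets]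
    by (simp add: push_measure_def measure_distr)
qed

lemma (in prob_space) inter_nonempty_if_prob_gt_half:
  assumes "A \<in> events" "B \<in> events" "prob A > 1/2" "prob B > 1/2"
  shows "A \<inter> B \<noteq> {}"
proof
  assume "A \<inter> B = {}"
  then have "prob (A \<union> B) = prob A + prob B"
    using assms(1,2) by (simp add: finite_measure_Union)
  with assms(3,4) prob_le_1[of "A \<union> B"] show False by simp
qed

lemma orbit_between_balls_if_weak_star_transitive:
  assumes "\<And>n. n \<ge> 1 \<Longrightarrow> continuous_on X (f n)"
    and "\<And>n. n \<ge> 1 \<Longrightarrow> f n ` X \<subseteq> X"
    and "nonauto_transitive (weak_star_topology X) (\<lambda>n. push_measure X (iter_comp f n))"
    and "x \<in> X" "y \<in> X" "r > 0" "s > 0"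
  obtains n z where "n \<ge> 1" "z \<in> ball x r \<inter> X" "iter_comp f n z \<in> ball y s \<inter> X"
proof -
  obtain n \<mu> where n: "n \<ge> 1" and \<mu>: "\<mu> \<in> weak_star_nbhd X x r"
    and push: "push_measure X (iter_comp f n) \<mu> \<in> weak_star_nbhd X y s"
    using assms(3)[unfolded nonauto_transitive_def, rule_format,
        OF conjI[OF openin_weak_star_nbhd[OF assms(6)] conjI[OF openin_weak_star_nbhd[OF assms(7)]]]]
      return_in_weak_star_nbhd[OF assms(4,6)] return_in_weak_star_nbhd[OF assms(5,7)]
    by blast
  define F where "F = iter_comp f n"
  have F: "continuous_on X F" "F ` X \<subseteq> X"
    using iter_comp_continuous_on_image_subset[OF assms(1,2)] by (auto simp: F_def)
  have bpm: "\<mu> \<in> borel_prob_measures X"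
    using \<mu> by (simp add: weak_star_nbhd_def)
  then have sets: "sets \<mu> = sets (restrict_space borel X)" and "prob_space \<mu>"
    by (auto simp: borel_prob_measures_def)
  have ball_y: "ball y s \<inter> X \<in> sets (restrict_space borel X)"
    by (auto simp: sets_restrict_space)
  have "measure \<mu> (F -` (ball y s \<inter> X) \<inter> X) > 1/2"
    using measure_ball_gt_half_if_in_weak_star_nbhd[OF push assms(7)]
      measure_push_measure[OF bpm F ball_y] by (simp add: F_def)
  moreover have "F -` (ball y s \<inter> X) \<inter> X \<in> sets \<mu>"
    using measurable_sets[OF measurable_restrict_borel_if_continuous_on[OF F] ball_y]
    by (simp add: sets space_restrict_space)
  moreover have "ball x r \<inter> X \<in> sets \<mu>"
    by (auto simp: sets sets_restrict_space)
  ultimately have "(ball x r \<inter> X) \<inter> (F -` (ball y s \<inter> X) \<inter> X) \<noteq> {}"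
    using prob_space.inter_nonempty_if_prob_gt_half[OF \<open>prob_space \<mu>\<close>]
      measure_ball_gt_half_if_in_weak_star_nbhd[OF \<mu> assms(6)] by blast
  then obtain z where "z \<in> ball x r \<inter> X" "F z \<in> ball y s \<inter> X"
    by blast
  with n show ?thesis
    unfolding F_def by (rule that)
qed

theorem corollary3p1:
  fixes X :: "'a::metric_space set" and f :: "nat \<Rightarrow> 'a \<Rightarrow> 'a"
  assumes "compact X"
    and "\<And>n. n \<ge> 1 \<Longrightarrow> continuous_on X (f n)"
    and "\<And>n. n \<ge> 1 \<Longrightarrow> f n ` X \<subseteq> X"
    and "nonauto_transitive (weak_star_topology X)
           (\<lambda>n. push_measure X (iter_comp f n))"
  shows "nonauto_transitive (top_of_set X) (iter_comp f)"
  unfolding nonauto_transitive_def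
proof (intro allI impI)
  fix U V assume UV: "openin (top_of_set X) U \<and> openin (top_of_set X) V \<and> U \<noteq> {} \<and> V \<noteq> {}"
  then obtain x y where "x \<in> U" "y \<in> V" by blast
  with UV obtain r s where r: "r > 0" "ball x r \<inter> X \<subseteq> U" and s: "s > 0" "ball y s \<inter> X \<subseteq> V"
    by (force simp: openin_contains_ball)
  have "x \<in> X" "y \<in> X"
    using \<open>x \<in> U\<close> \<open>y \<in> V\<close> UV openin_imp_subset by blast+
  with r s obtain n z where "n \<ge> 1" "z \<in> ball x r \<inter> X" "iter_comp f n z \<in> ball y s \<inter> X"
    using orbit_between_balls_if_weak_star_transitive[OF assms(2-4)] by metis
  with r s show "\<exists>n\<ge>1. iter_comp f n ` U \<inter> V \<noteq> {}" by blast
qed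

end
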